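(* Every point $(s:t:u:v)\in\mathcal{D}_1^{(2)}$ has $t\neq0$, and the map $sym_{\mathcal{D}_1^{(2)}}:\mathcal{D}_1^{(2)}\to\mathcal{D}_1$, $(s:t:u:v)\mapsto\left(\frac{u}{t},\frac{v}{t}\right)$, is a proper holomorphic map satisfying $sym_{\mathcal{D}_1^{(2)}}\circ J=F\circ sym$ on $\mathbb{D}\times\mathbb{D}$, where $J(z,w)=(z-w:1-zw:i(1+zw):-i(z+w))$, $F(s,p)=\left(i\frac{1+p}{1-p},\,-i\frac{s}{1-p}\right)$ and $sym(z_1,z_2)=(z_1+z_2,z_1z_2)$.
   Context: $\mathbb{D}$ is the open unit disc in $\mathbb{C}$; $\mathbb{G}=\{(z_1+z_2,z_1z_2):z_1,z_2\in\mathbb{D}\}$; $\mathcal{D}_1=\{(z_1,z_2)\in\mathbb{C}^2: 1+|z_1|^2-|z_2|^2>|1+z_1^2-z_2^2|,\ \mathrm{Im}(z_1(1+\overline{z_2}))>0\}$; $F:\mathbb{G}\to\mathcal{D}_1$ and $J:\mathbb{D}\times\mathbb{D}\to\mathcal{D}_1^{(2)}$ are biholomorphisms. Points of $\mathbb{CP}^3$ are written $(s:t:u:v)$, and $\mathcal{D}_1^{(2)}=\{(1:t:u:v): |t|^2+|u|^2-|v|^2>1,\ t^2+u^2-v^2=1,\ \mathrm{Im}(u(\overline{t}+\overline{v}))>0\}\cup\{(0:t:u:v): t^2+u^2-v^2=0,\ \mathrm{Im}(u(\overline{t}+\overline{v}))>0\}$. *)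

theory Defs
  imports "HOL-Analysis.Analysis"
begin

text \<open>Points of CP^3 are modelled as equivalence classes (complex lines minus 0)
  of nonzero vectors x in complex^4, with x$1 = s, x$2 = t, x$3 = u, x$4 = v.\<close>

definition proj_point :: "complex^4 \<Rightarrow> (complex^4) set" where
  "proj_point x = {c *s x | c. c \<noteq> 0}"

definition CP3 :: "(complex^4) set set" where
  "CP3 = {proj_point x | x. x \<noteq> 0}"

definition hom :: "complex \<Rightarrow> complex \<Rightarrow> complex \<Rightarrow> complex \<Rightarrow> (complex^4) set" ("'(_ : _ : _ : _')") where
  "hom s t u v = proj_point (vector [s, t, u, v])"

text \<open>Quotient topology on CP^3: a set of points is open iff the union of the
  corresponding lines (its preimage in complex^4 minus 0) is open.\<close>
definition CP3_top :: "(complex^4) set topology" where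
  "CP3_top = topology (\<lambda>U. U \<subseteq> CP3 \<and> open (\<Union>U))"

definition holo4_on :: "(complex^4 \<Rightarrow> complex \<times> complex) \<Rightarrow> (complex^4) set \<Rightarrow> bool" where
  "holo4_on G W \<longleftrightarrow> (\<forall>y\<in>W. \<exists>L. (G has_derivative L) (at y) \<and>
      (\<forall>c v. L (c *s v) = (c * fst (L v), c * snd (L v))))"

definition holo_on_proj :: "((complex^4) set \<Rightarrow> complex \<times> complex) \<Rightarrow> (complex^4) set set \<Rightarrow> bool" where
  "holo_on_proj g X \<longleftrightarrow> (\<forall>P\<in>X. \<forall>x\<in>P. \<exists>W G. open W \<and> x \<in> W \<and> 0 \<notin> W \<and> holo4_on G W \<and>
      (\<forall>Q\<in>X. \<forall>y\<in>Q. y \<in> W \<longrightarrow> G y = g Q))"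

definition D1 :: "(complex \<times> complex) set" where
  "D1 = {(z1, z2). 1 + (cmod z1)^2 - (cmod z2)^2 > cmod (1 + z1^2 - z2^2) \<and>
                   Im (z1 * (1 + cnj z2)) > 0}"

definition D1_2 :: "(complex^4) set set" where
  "D1_2 = {(1 : t : u : v) | t u v. (cmod t)^2 + (cmod u)^2 - (cmod v)^2 > 1 \<and>
                t^2 + u^2 - v^2 = 1 \<and> Im (u * (cnj t + cnj v)) > 0}
        \<union> {(0 : t : u : v) | t u v. t^2 + u^2 - v^2 = 0 \<and> Im (u * (cnj t + cnj v)) > 0}"

definition sym_D1_2 :: "(complex^4) set \<Rightarrow> complex \<times> complex" where
  "sym_D1_2 P = (let x = (SOME x. x \<in> P) in (x$3 / x$2, x$4 / x$2))"

definition J :: "complex \<Rightarrow> complex \<Rightarrow> (complex^4) set" where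
  "J z w = (z - w : 1 - z*w : \<i> * (1 + z*w) : - \<i> * (z + w))"

definition F :: "complex \<times> complex \<Rightarrow> complex \<times> complex" where
  "F sp = (case sp of (s, p) \<Rightarrow> (\<i> * (1 + p) / (1 - p), - \<i> * s / (1 - p)))"

definition sym :: "complex \<times> complex \<Rightarrow> complex \<times> complex" where
  "sym zz = (case zz of (z1, z2) \<Rightarrow> (z1 + z2, z1 * z2))"

end

theory Submission
  imports Defs
begin

text \<open>Multiplying the conditions defining D1 at (u/t, v/t) by |t|^2 gives conditions on (t, u, v)
  that are invariant under scaling and force t \<noteq> 0, since |u|^2 - |v|^2 \<le> |u^2 - v^2|.
  Both pieces of D1_2 satisfy them (for s = 0 because z2^2 = 1 + z1^2 and
  Im (z1 (1 + cnj z2)) > 0 imply |z2|^2 < 1 + |z1|^2), so normalising t = 1 identifies D1_2 with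
  the classes (\<sigma> : 1 : z1 : z2) with (z1, z2) \<in> D1 and \<sigma>^2 = 1 + z1^2 - z2^2. Then sym is
  induced by the holomorphic map y \<mapsto> (y3/y2, y4/y2) on {y2 \<noteq> 0}, and the preimage of a compact
  K \<subseteq> D1 is the image under the quotient map of the compact set of such vectors over K.\<close>

lemma vector_4 [simp]:
  "(vector [a, b, c, d] :: ('a::zero)^4) $ 1 = a"
  "(vector [a, b, c, d] :: ('a::zero)^4) $ 2 = b"
  "(vector [a, b, c, d] :: ('a::zero)^4) $ 3 = c"
  "(vector [a, b, c, d] :: ('a::zero)^4) $ 4 = d"
  unfolding vector_def by simp_all

lemma vector_4_eta: "vector [x$1, x$2, x$3, x$4] = (x :: ('a::zero)^4)"
  by (simp add: vec_eq_iff forall_4)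

lemma proj_point_self: "x \<in> proj_point x"
  unfolding proj_point_def by (auto intro: exI[of _ 1])

lemma proj_point_memE:
  assumes "y \<in> proj_point x"
  obtains c where "c \<noteq> 0" "y = c *s x"
  using assms unfolding proj_point_def by auto

lemma proj_point_scale: "c \<noteq> 0 \<Longrightarrow> proj_point (c *s x) = proj_point x"
  unfolding proj_point_def
proof safe
  fix d :: complex assume "c \<noteq> 0" "d \<noteq> 0"
  then show "\<exists>e. d *s (c *s x) = e *s x \<and> e \<noteq> 0"
    by (intro exI[of _ "d * c"]) simp
  show "\<exists>e. d *s x = e *s (c *s x) \<and> e \<noteq> 0"
    using \<open>c \<noteq> 0\<close> \<open>d \<noteq> 0\<close> by (intro exI[of _ "d / c"]) simp
qed

lemma proj_point_eq_of_mem: "y \<in> proj_point x \<Longrightarrow> proj_point y = proj_point x"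
  by (erule proj_point_memE) (simp add: proj_point_scale)

lemma hom_scale: "c \<noteq> 0 \<Longrightarrow> (c * s : c * t : c * u : c * v) = (s : t : u : v)"
proof -
  assume "c \<noteq> 0"
  have "vector [c * s, c * t, c * u, c * v] = c *s (vector [s, t, u, v] :: complex^4)"
    by (simp add: vec_eq_iff forall_4)
  with \<open>c \<noteq> 0\<close> show ?thesis
    unfolding hom_def by (simp add: proj_point_scale)
qed

lemma hom_normalize: "t \<noteq> 0 \<Longrightarrow> (s : t : u : v) = (s / t : 1 : u / t : v / t)"
  using hom_scale[of "1 / t" s t u v] by simp

lemma sym_D1_2_proj_point: "sym_D1_2 (proj_point x) = (x$3 / x$2, x$4 / x$2)"
proof -
  have "(SOME y. y \<in> proj_point x) \<in> proj_point x"
    using proj_point_self by (rule someI)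
  then obtain c where "c \<noteq> 0" "(SOME y. y \<in> proj_point x) = c *s x"
    by (rule proj_point_memE)
  then show ?thesis
    unfolding sym_D1_2_def Let_def by simp
qed

lemma sym_D1_2_hom: "sym_D1_2 (s : t : u : v) = (u / t, v / t)"
  unfolding hom_def sym_D1_2_proj_point by simp

lemma sym_D1_2_J: "sym_D1_2 (J z w) = F (sym (z, w))"
  unfolding J_def sym_D1_2_hom F_def sym_def by simp

lemma Union_CP3: "\<Union>CP3 = - {0}"
proof
  have "y \<noteq> 0" if "x \<noteq> 0" "y \<in> proj_point x" for x y
    using that by (auto elim!: proj_point_memE simp: vec_eq_iff)
  then show "\<Union>CP3 \<subseteq> - {0}"
    unfolding CP3_def by blast
  show "- {0} \<subseteq> \<Union>CP3"
    unfolding CP3_def using proj_point_self by blast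
qed

lemma CP3_eq_proj_point: "P \<in> CP3 \<Longrightarrow> x \<in> P \<Longrightarrow> P = proj_point x"
  unfolding CP3_def using proj_point_eq_of_mem by blast

lemma istopology_CP3: "istopology (\<lambda>U. U \<subseteq> CP3 \<and> open (\<Union>U))"
proof -
  have "\<Union>(S \<inter> T) = \<Union>S \<inter> \<Union>T" if "S \<subseteq> CP3" "T \<subseteq> CP3" for S T
  proof
    show "\<Union>S \<inter> \<Union>T \<subseteq> \<Union>(S \<inter> T)"
    proof
      fix x assume "x \<in> \<Union>S \<inter> \<Union>T"
      then obtain P Q where "P \<in> S" "Q \<in> T" "x \<in> P" "x \<in> Q" by blast
      moreover from this have "P = Q"
        using that CP3_eq_proj_point by (metis subsetD)
      ultimately show "x \<in> \<Union>(S \<inter> T)" by blast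
    qed
  qed blast
  moreover have "\<Union>(\<Union>K) = (\<Union>S\<in>K. \<Union>S)" for K :: "(complex^4) set set set"
    by blast
  ultimately show ?thesis
    unfolding istopology_def by auto
qed

lemma openin_CP3_top: "openin CP3_top U \<longleftrightarrow> U \<subseteq> CP3 \<and> open (\<Union>U)"
  unfolding CP3_top_def using istopology_CP3 by simp

lemma topspace_CP3_top: "topspace CP3_top = CP3"
proof -
  have "openin CP3_top CP3"
    unfolding openin_CP3_top Union_CP3 by auto
  then show ?thesis
    using openin_subset openin_CP3_top openin_topspace by blast
qed

lemma continuous_map_proj_point: "continuous_map (subtopology euclidean (- {0})) CP3_top proj_point"
  unfolding continuous_map_def
proof (intro conjI allI impI)
  show "proj_point \<in> topspace (subtopology euclidean (- {0})) \<rightarrow> topspace CP3_top"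
    unfolding topspace_CP3_top by (auto simp: CP3_def)
  fix U assume U: "openin CP3_top U"
  have "proj_point x \<in> U \<longleftrightarrow> x \<in> \<Union>U" if "x \<noteq> 0" for x
    using U proj_point_self CP3_eq_proj_point unfolding openin_CP3_top by blast
  then have "{x \<in> topspace (subtopology euclidean (- {0})). proj_point x \<in> U} = \<Union>U \<inter> - {0}"
    by auto
  then show "openin (subtopology euclidean (- {0}))
      {x \<in> topspace (subtopology euclidean (- {0})). proj_point x \<in> U}"
    using U unfolding openin_CP3_top openin_subtopology by auto
qed

lemma compactin_CP3_top_proj_point_image:
  assumes "compact C" "0 \<notin> C"
  shows "compactin CP3_top (proj_point ` C)"
proof -
  have "compactin (subtopology euclidean (- {0})) C"
    using assms by (auto simp: compactin_subtopology)
  then show ?thesis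
    using continuous_map_proj_point by (rule image_compactin)
qed

lemma holo4_on_coordinate_quotients: "holo4_on (\<lambda>y. (y$i / y$k, y$j / y$k)) {y. y$k \<noteq> 0}"
  unfolding holo4_on_def
proof (intro ballI exI conjI allI)
  fix y :: "complex^4"
  assume "y \<in> {y. y$k \<noteq> 0}"
  then have "y$k \<noteq> 0" by simp
  have nth: "((\<lambda>x. x$l) has_derivative (\<lambda>h. h$l)) (at y)" for l
    using bounded_linear_vec_nth by (rule bounded_linear_imp_has_derivative)
  define L where "L h = ((h$i * y$k - y$i * h$k) / (y$k * y$k), (h$j * y$k - y$j * h$k) / (y$k * y$k))"
    for h :: "complex^4"
  show "((\<lambda>y. (y$i / y$k, y$j / y$k)) has_derivative L) (at y)"
    unfolding L_def by (intro has_derivative_Pair has_derivative_divide' nth \<open>y$k \<noteq> 0\<close>)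
  show "L (c *s v) = (c * fst (L v), c * snd (L v))" for c v
    unfolding L_def by (simp add: algebra_simps)
qed

text \<open>The conditions defining D1 at (u/t, v/t), multiplied by |t|^2.\<close>
definition D1_cone :: "complex \<Rightarrow> complex \<Rightarrow> complex \<Rightarrow> bool" where
  "D1_cone t u v \<longleftrightarrow> cmod (t^2 + u^2 - v^2) < (cmod t)^2 + (cmod u)^2 - (cmod v)^2
     \<and> Im (u * (cnj t + cnj v)) > 0"

lemma D1_cone_one: "D1_cone 1 z1 z2 \<longleftrightarrow> (z1, z2) \<in> D1"
  unfolding D1_cone_def D1_def by simp

lemma Im_cone_scale:
  "Im (c * u * (cnj (c * t) + cnj (c * v))) = (cmod c)^2 * Im (u * (cnj t + cnj v))"
proof -
  have "c * u * (cnj (c * t) + cnj (c * v)) = (c * cnj c) * (u * (cnj t + cnj v))"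
    by (simp add: algebra_simps)
  also have "c * cnj c = of_real ((cmod c)^2)"
    by (rule complex_norm_square[symmetric])
  finally show ?thesis
    by (simp only:) simp
qed

lemma D1_cone_scale: "c \<noteq> 0 \<Longrightarrow> D1_cone (c * t) (c * u) (c * v) \<longleftrightarrow> D1_cone t u v"
proof -
  assume "c \<noteq> 0"
  then have pos: "(cmod c)^2 > 0" by simp
  have "(c * t)^2 + (c * u)^2 - (c * v)^2 = c^2 * (t^2 + u^2 - v^2)"
    by (simp add: algebra_simps)
  then have "cmod ((c * t)^2 + (c * u)^2 - (c * v)^2) = (cmod c)^2 * cmod (t^2 + u^2 - v^2)"
    by (simp add: norm_mult norm_power)
  moreover have "(cmod (c * t))^2 + (cmod (c * u))^2 - (cmod (c * v))^2
      = (cmod c)^2 * ((cmod t)^2 + (cmod u)^2 - (cmod v)^2)"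
    by (simp add: norm_mult algebra_simps)
  ultimately show ?thesis
    unfolding D1_cone_def Im_cone_scale using pos by (simp add: zero_less_mult_iff)
qed

lemma norm_power2_diff_ge: "(cmod u)^2 - (cmod v)^2 \<le> cmod (u^2 - v^2)"
proof -
  have "(cmod u)^2 - (cmod v)^2 = Re ((u - v) * cnj (u + v))"
    unfolding cmod_power2 by (simp add: algebra_simps power2_eq_square)
  also have "\<dots> \<le> cmod ((u - v) * cnj (u + v))"
    by (rule complex_Re_le_cmod)
  also have "\<dots> = cmod ((u - v) * (u + v))"
    by (simp only: norm_mult complex_mod_cnj)
  also have "(u - v) * (u + v) = u^2 - v^2"
    by (simp add: algebra_simps power2_eq_square)
  finally show ?thesis .
qed

lemma D1_cone_imp_nonzero: "D1_cone t u v \<Longrightarrow> t \<noteq> 0"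
  using norm_power2_diff_ge[of u v] unfolding D1_cone_def by auto

lemma D1_cone_iff: "t \<noteq> 0 \<Longrightarrow> D1_cone t u v \<longleftrightarrow> (u / t, v / t) \<in> D1"
  using D1_cone_scale[of "1 / t" t u v] by (simp add: D1_cone_one)

lemma in_D1_of_null:
  assumes "1 + z1^2 - z2^2 = 0" "Im (z1 * (1 + cnj z2)) > 0"
  shows "(z1, z2) \<in> D1"
proof -
  obtain a b where z1: "z1 = Complex a b" by (metis complex.exhaust)
  obtain c d where z2: "z2 = Complex c d" by (metis complex.exhaust)
  have re: "c^2 - d^2 = 1 + a^2 - b^2" and im: "c * d = a * b"
    using arg_cong[OF assms(1), of Re] arg_cong[OF assms(1), of Im]
    by (simp_all add: z1 z2 power2_eq_square)
  have pos: "b * (1 + c) - a * d > 0"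
    using assms(2) by (simp add: z1 z2 algebra_simps)
  have "d^2 < b^2" \<comment> \<open>by re, |z2|^2 = 1 + |z1|^2 - 2 (b^2 - d^2)\<close>
  proof (rule ccontr)
    assume "\<not> d^2 < b^2"
    then have "b^2 \<le> d^2" and c: "1 + a^2 \<le> c^2"
      using re by linarith+
    then have "(1 + a^2) * b^2 \<le> c^2 * d^2"
      by (intro mult_mono) auto
    also have "\<dots> = a^2 * b^2"
      using im by (metis power_mult_distrib)
    finally have "b^2 \<le> 0"
      by (simp add: algebra_simps)
    then have "b = 0"
      by simp
    have "c^2 \<noteq> 0"
      using c zero_le_power2[of a] by linarith
    with im \<open>b = 0\<close> have "d = 0"
      by simp
    with \<open>b = 0\<close> pos show False
      by simp
  qed
  with re have "(cmod z2)^2 < 1 + (cmod z1)^2"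
    by (simp add: z1 z2 cmod_power2)
  with assms show ?thesis
    unfolding D1_def by simp
qed

lemma D1_cone_of_null:
  assumes null: "t^2 + u^2 - v^2 = 0" and im: "Im (u * (cnj t + cnj v)) > 0"
  shows "D1_cone t u v"
proof -
  have "t \<noteq> 0"
  proof
    assume "t = 0"
    with null have "u = v \<or> u = - v"
      by (simp add: power2_eq_iff)
    with im \<open>t = 0\<close> show False
      by (auto simp: complex_mult_cnj)
  qed
  have "1 + (u / t)^2 - (v / t)^2 = 0"
    using null \<open>t \<noteq> 0\<close> by (simp add: field_simps)
  moreover have "Im (u / t * (1 + cnj (v / t))) > 0"
    using Im_cone_scale[of "1 / t" u t v] im \<open>t \<noteq> 0\<close> by simp
  ultimately have "(u / t, v / t) \<in> D1"
    by (rule in_D1_of_null)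
  with \<open>t \<noteq> 0\<close> show ?thesis
    by (simp add: D1_cone_iff)
qed

lemma D1_2_iff_cone:
  "P \<in> D1_2 \<longleftrightarrow> (\<exists>s t u v. P = (s : t : u : v) \<and> s^2 = t^2 + u^2 - v^2 \<and> D1_cone t u v)"
proof
  assume "P \<in> D1_2"
  then consider
    (finite) t u v where "P = (1 : t : u : v)" "(cmod t)^2 + (cmod u)^2 - (cmod v)^2 > 1"
      "t^2 + u^2 - v^2 = 1" "Im (u * (cnj t + cnj v)) > 0"
  | (infinite) t u v where "P = (0 : t : u : v)" "t^2 + u^2 - v^2 = 0" "Im (u * (cnj t + cnj v)) > 0"
    unfolding D1_2_def by blast
  then show "\<exists>s t u v. P = (s : t : u : v) \<and> s^2 = t^2 + u^2 - v^2 \<and> D1_cone t u v"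
  proof cases
    case finite
    then have "1^2 = t^2 + u^2 - v^2" "D1_cone t u v"
      unfolding D1_cone_def by simp_all
    with finite show ?thesis by blast
  next
    case infinite
    then have "0^2 = t^2 + u^2 - v^2" "D1_cone t u v"
      using D1_cone_of_null by simp_all
    with infinite show ?thesis by blast
  qed
next
  assume "\<exists>s t u v. P = (s : t : u : v) \<and> s^2 = t^2 + u^2 - v^2 \<and> D1_cone t u v"
  then obtain s t u v where P: "P = (s : t : u : v)" and quadric: "s^2 = t^2 + u^2 - v^2"
    and cone: "D1_cone t u v" by blast
  show "P \<in> D1_2"
  proof (cases "s = 0")
    case True
    with quadric have "t^2 + u^2 - v^2 = 0"
      by simp
    with True P cone show ?thesis
      unfolding D1_2_def D1_cone_def by blast
  next
    case False
    have "P = (1 : t / s : u / s : v / s)"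
      using P hom_scale[of "1 / s" s t u v] False by simp
    have "(t / s)^2 + (u / s)^2 - (v / s)^2 = (t^2 + u^2 - v^2) / s^2"
      by (simp add: power_divide add_divide_distrib diff_divide_distrib)
    also have "\<dots> = 1"
      using False by (simp flip: quadric)
    finally have quadric_1: "(t / s)^2 + (u / s)^2 - (v / s)^2 = 1" .
    have "D1_cone (t / s) (u / s) (v / s)"
      using D1_cone_scale[of "1 / s" t u v] cone False by simp
    then have "(cmod (t / s))^2 + (cmod (u / s))^2 - (cmod (v / s))^2 > 1"
      "Im (u / s * (cnj (t / s) + cnj (v / s))) > 0"
      unfolding D1_cone_def quadric_1 by simp_all
    with \<open>P = (1 : t / s : u / s : v / s)\<close> quadric_1 show ?thesis
      unfolding D1_2_def by blast
  qed
qed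

lemma D1_2_eq: "D1_2 = {(\<sigma> : 1 : z1 : z2) | \<sigma> z1 z2. (z1, z2) \<in> D1 \<and> \<sigma>^2 = 1 + z1^2 - z2^2}"
proof (intro equalityI subsetI)
  fix P assume "P \<in> D1_2"
  then obtain s t u v where P: "P = (s : t : u : v)" and quadric: "s^2 = t^2 + u^2 - v^2"
    and cone: "D1_cone t u v"
    unfolding D1_2_iff_cone by blast
  from cone have "t \<noteq> 0"
    by (rule D1_cone_imp_nonzero)
  have "(s / t)^2 = s^2 / t^2"
    by (simp add: power_divide)
  also have "\<dots> = 1 + (u / t)^2 - (v / t)^2"
    using quadric \<open>t \<noteq> 0\<close> by (simp add: power_divide add_divide_distrib diff_divide_distrib)
  finally have "(s / t)^2 = 1 + (u / t)^2 - (v / t)^2" .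
  moreover have "P = (s / t : 1 : u / t : v / t)"
    unfolding P using \<open>t \<noteq> 0\<close> by (rule hom_normalize)
  moreover have "(u / t, v / t) \<in> D1"
    using cone \<open>t \<noteq> 0\<close> by (simp add: D1_cone_iff)
  ultimately show "P \<in> {(\<sigma> : 1 : z1 : z2) | \<sigma> z1 z2. (z1, z2) \<in> D1 \<and> \<sigma>^2 = 1 + z1^2 - z2^2}"
    by (intro CollectI exI conjI) assumption+
next
  fix P assume "P \<in> {(\<sigma> : 1 : z1 : z2) | \<sigma> z1 z2. (z1, z2) \<in> D1 \<and> \<sigma>^2 = 1 + z1^2 - z2^2}"
  then obtain \<sigma> z1 z2 where P: "P = (\<sigma> : 1 : z1 : z2)" and "(z1, z2) \<in> D1"
    and "\<sigma>^2 = 1 + z1^2 - z2^2"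
    by blast
  then have "\<sigma>^2 = 1^2 + z1^2 - z2^2" "D1_cone 1 z1 z2"
    by (simp_all add: D1_cone_one)
  with P show "P \<in> D1_2"
    unfolding D1_2_iff_cone by blast
qed

lemma D1_2E:
  assumes "P \<in> D1_2"
  obtains \<sigma> z1 z2 where "P = (\<sigma> : 1 : z1 : z2)" "(z1, z2) \<in> D1" "\<sigma>^2 = 1 + z1^2 - z2^2"
  using assms unfolding D1_2_eq by blast

lemma D1_2_subset_CP3: "D1_2 \<subseteq> CP3"
proof
  fix P assume "P \<in> D1_2"
  then obtain \<sigma> z1 z2 where "P = (\<sigma> : 1 : z1 : z2)"
    by (rule D1_2E)
  then have "P = proj_point (vector [\<sigma>, 1, z1, z2])"
    by (simp add: hom_def)
  moreover have "vector [\<sigma>, 1, z1, z2] \<noteq> (0 :: complex^4)"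
    by (metis one_neq_zero vector_4(2) zero_index)
  ultimately show "P \<in> CP3"
    unfolding CP3_def by blast
qed

lemma D1_2_second_coordinate_nonzero:
  assumes "P \<in> D1_2" "x \<in> P"
  shows "x$2 \<noteq> 0"
proof -
  obtain \<sigma> z1 z2 where "P = (\<sigma> : 1 : z1 : z2)"
    using assms(1) by (rule D1_2E)
  with assms(2) have "x \<in> proj_point (vector [\<sigma>, 1, z1, z2])"
    by (simp add: hom_def)
  then obtain c where "c \<noteq> 0" "x = c *s vector [\<sigma>, 1, z1, z2]"
    by (rule proj_point_memE)
  then show ?thesis
    by simp
qed

lemma sym_D1_2_in_D1: "P \<in> D1_2 \<Longrightarrow> sym_D1_2 P \<in> D1"
  by (erule D1_2E) (simp add: sym_D1_2_hom)

lemma holo_on_proj_sym_D1_2: "holo_on_proj sym_D1_2 D1_2"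
  unfolding holo_on_proj_def
proof (intro ballI)
  fix P x assume "P \<in> D1_2" "x \<in> P"
  let ?W = "{y :: complex^4. y$2 \<noteq> 0}"
  have "open ?W"
    by (intro open_Collect_neq continuous_intros)
  moreover have "x \<in> ?W"
    using \<open>P \<in> D1_2\<close> \<open>x \<in> P\<close> by (simp add: D1_2_second_coordinate_nonzero)
  moreover have "(y$3 / y$2, y$4 / y$2) = sym_D1_2 Q" if "Q \<in> D1_2" "y \<in> Q" for Q y
    using that D1_2_subset_CP3 CP3_eq_proj_point by (metis subsetD sym_D1_2_proj_point)
  ultimately show "\<exists>W G. open W \<and> x \<in> W \<and> 0 \<notin> W \<and> holo4_on G W \<and>
      (\<forall>Q\<in>D1_2. \<forall>y\<in>Q. y \<in> W \<longrightarrow> G y = sym_D1_2 Q)"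
    using holo4_on_coordinate_quotients[of 3 2 4] by (intro exI[of _ ?W]) auto
qed

lemma bounded_vec_componentwise:
  fixes S :: "(('a::real_normed_algebra_1)^'n) set"
  assumes "\<And>x i. x \<in> S \<Longrightarrow> norm (x$i) \<le> R"
  shows "bounded S"
  unfolding bounded_iff
proof (intro exI ballI)
  fix x assume "x \<in> S"
  then show "norm x \<le> norm ((\<chi> i. of_real R) :: 'a^'n)"
    using assms by (intro norm_le_componentwise_cart) (simp add: order_trans[OF _ abs_ge_self])
qed

lemma compact_affine_quadric_over:
  assumes "compact K"
  shows "compact {x :: complex^4. x$2 = 1 \<and> (x$3, x$4) \<in> K \<and> (x$1)^2 = 1 + (x$3)^2 - (x$4)^2}"
    (is "compact ?C")
proof -
  have "closed ((\<lambda>x :: complex^4. (x$3, x$4)) -` K)"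
    using compact_imp_closed[OF assms] by (rule continuous_closed_vimage) (intro continuous_intros)
  then have "closed ?C"
    unfolding vimage_def by (intro closed_Collect_conj closed_Collect_eq continuous_intros)
  moreover obtain B where "B > 0" and B: "\<forall>z\<in>K. norm z \<le> B"
    using compact_imp_bounded[OF assms, unfolded bounded_pos] by blast
  have "norm (x$i) \<le> 1 + B" if "x \<in> ?C" for x i
  proof -
    from that have x2: "x$2 = 1" and K: "(x$3, x$4) \<in> K"
      and quadric: "(x$1)^2 = 1 + (x$3)^2 - (x$4)^2" by auto
    have x3: "cmod (x$3) \<le> B" and x4: "cmod (x$4) \<le> B"
      using B K norm_fst_le[of "x$3" "x$4"] norm_snd_le[of "x$4" "x$3"] by fastforce+
    have "(norm (x$3, x$4))^2 \<le> B^2"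
      using B K by (simp add: power_mono)
    have "(cmod (x$1))^2 = cmod (1 + (x$3)^2 - (x$4)^2)"
      by (simp add: norm_power flip: quadric)
    also have "\<dots> \<le> 1 + (cmod (x$3))^2 + (cmod (x$4))^2"
      using norm_triangle_ineq4[of "1 + (x$3)^2" "(x$4)^2"] norm_triangle_ineq[of 1 "(x$3)^2"]
      by (simp add: norm_power)
    also have "\<dots> = 1 + (norm (x$3, x$4))^2"
      by (simp add: norm_Pair)
    also have "\<dots> \<le> 1 + B^2 + 2 * B"
      using \<open>(norm (x$3, x$4))^2 \<le> B^2\<close> \<open>B > 0\<close> by linarith
    also have "\<dots> = (1 + B)^2"
      by (simp add: power2_sum)
    finally have "cmod (x$1) \<le> 1 + B"
      by (rule power2_le_imp_le) (use \<open>B > 0\<close> in simp)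
    with x2 x3 x4 \<open>B > 0\<close> show ?thesis
      using exhaust_4[of i] by auto
  qed
  then have "bounded ?C"
    by (rule bounded_vec_componentwise)
  ultimately show ?thesis
    by (simp add: compact_eq_bounded_closed)
qed

lemma compactin_sym_D1_2_preimage:
  assumes "compact K" "K \<subseteq> D1"
  shows "compactin CP3_top {P\<in>D1_2. sym_D1_2 P \<in> K}"
proof -
  let ?C = "{x :: complex^4. x$2 = 1 \<and> (x$3, x$4) \<in> K \<and> (x$1)^2 = 1 + (x$3)^2 - (x$4)^2}"
  have "{P\<in>D1_2. sym_D1_2 P \<in> K} = proj_point ` ?C"
  proof (intro equalityI subsetI)
    fix P assume P: "P \<in> {P\<in>D1_2. sym_D1_2 P \<in> K}"
    then obtain \<sigma> z1 z2 where P_eq: "P = (\<sigma> : 1 : z1 : z2)" and "\<sigma>^2 = 1 + z1^2 - z2^2"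
      unfolding D1_2_eq by blast
    moreover have "(z1, z2) \<in> K"
      using P by (simp add: P_eq sym_D1_2_hom)
    ultimately show "P \<in> proj_point ` ?C"
      unfolding hom_def by (intro image_eqI[where x = "vector [\<sigma>, 1, z1, z2]"]) auto
  next
    fix P assume "P \<in> proj_point ` ?C"
    then obtain x where x: "x \<in> ?C" and "P = proj_point x"
      by blast
    then have "P = (x$1 : 1 : x$3 : x$4)"
      unfolding hom_def using vector_4_eta[of x] by simp
    with x assms(2) show "P \<in> {P\<in>D1_2. sym_D1_2 P \<in> K}"
      unfolding D1_2_eq by (auto simp: sym_D1_2_hom)
  qed
  moreover have "0 \<notin> ?C"
    by simp
  ultimately show ?thesis
    by (simp add: compactin_CP3_top_proj_point_image compact_affine_quadric_over assms(1))
qed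

theorem theorem4p9:
  shows "(\<forall>P\<in>D1_2. \<forall>x\<in>P. x$2 \<noteq> 0)
    \<and> sym_D1_2 ` D1_2 \<subseteq> D1
    \<and> holo_on_proj sym_D1_2 D1_2
    \<and> (\<forall>K. compact K \<and> K \<subseteq> D1 \<longrightarrow> compactin CP3_top {P\<in>D1_2. sym_D1_2 P \<in> K})
    \<and> (\<forall>z w. cmod z < 1 \<and> cmod w < 1 \<longrightarrow> sym_D1_2 (J z w) = F (sym (z, w)))"
  using D1_2_second_coordinate_nonzero sym_D1_2_in_D1 holo_on_proj_sym_D1_2
    compactin_sym_D1_2_preimage sym_D1_2_J by blast

end
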